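(* Let $\mathcal A$ be a commutative semiring and $\mathcal W$ a semialgebra over $\mathcal A$ with a surpassing relation $\preceq$, and suppose $\mathcal W$ is affine over $\mathcal A$. Let $\mathcal K\subseteq\mathcal W$ be a central sub-semialgebra containing $\mathcal A$ such that $\mathcal W$ has a finite $\preceq$-base $B$ over $\mathcal K$. Then $\mathcal K$ is affine over $\mathcal A$.
   Context: A surpassing relation is a partial preorder $\preceq$ compatible with addition and with multiplication by elements. For a sub-semialgebra $\mathcal K$ containing $\mathcal A$ and $y_1,\dots,y_n$, $\mathcal A[y_1,\dots,y_n]$ denotes the $\mathcal A$-sub-semialgebra they generate. $\mathcal W$ (resp. $\mathcal K$) is affine over $\mathcal A$ if there are finitely many $y_1,\dots,y_n\in\mathcal W$ (resp. in $\mathcal K$) such that for every $w\in\mathcal W$ (resp. $w\in\mathcal K$) there is $w'\in\mathcal A[y_1,\dots,y_n]$ with $w'\preceq w$. $\mathcal K$ is central if $kw=wk$ for all $k\in\mathcal K$, $w\in\mathcal W$. A set $B$ $\preceq$-spans $\mathcal W$ over $\mathcal K$ if every $v\in\mathcal W$ satisfies $\sum_i k_ib_i\preceq v$ for some $k_i\in\mathcal K$, $b_i\in B$; $B$ is $\preceq$-independent over $\mathcal K$ if for distinct $b_i\in B$, $\sum k_ib_i\preceq\sum k_i'b_i$ with $k_i,k_i'\in\mathcal K$ implies $k_i\preceq k_i'$ for all $i$; a $\preceq$-base over $\mathcal K$ is a $\preceq$-independent $\preceq$-spanning set. *)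

theory Defs
  imports Main
begin

text \<open>The semialgebra W is the whole type 'w (a possibly noncommutative semiring with 1);
the commutative base semiring A is given as a subset of W (its image in W).\<close>

definition surpassing :: "('w::semiring_1 \<Rightarrow> 'w \<Rightarrow> bool) \<Rightarrow> bool" where
  "surpassing le \<longleftrightarrow>
     (\<forall>x. le x x) \<and>
     (\<forall>x y z. le x y \<longrightarrow> le y z \<longrightarrow> le x z) \<and>
     (\<forall>x y c. le x y \<longrightarrow> le (x + c) (y + c)) \<and>
     (\<forall>x y c. le x y \<longrightarrow> le (c * x) (c * y) \<and> le (x * c) (y * c))"

definition comm_subsemiring :: "'w::semiring_1 set \<Rightarrow> bool" where
  "comm_subsemiring A \<longleftrightarrow> 0 \<in> A \<and> 1 \<in> A \<and>
     (\<forall>a\<in>A. \<forall>b\<in>A. a + b \<in> A \<and> a * b \<in> A \<and> a * b = b * a)"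

text \<open>W is a semialgebra over A: scalars act by multiplication and are central in W.\<close>
definition semialgebra_over :: "'w::semiring_1 set \<Rightarrow> bool" where
  "semialgebra_over A \<longleftrightarrow> comm_subsemiring A \<and> (\<forall>a\<in>A. \<forall>w. a * w = w * a)"

definition sub_semialgebra :: "'w::semiring_1 set \<Rightarrow> 'w set \<Rightarrow> bool" where
  "sub_semialgebra A K \<longleftrightarrow> A \<subseteq> K \<and> (\<forall>x\<in>K. \<forall>y\<in>K. x + y \<in> K \<and> x * y \<in> K)"

inductive_set gen_alg :: "'w::semiring_1 set \<Rightarrow> 'w set \<Rightarrow> 'w set" for A Y where
  base: "a \<in> A \<Longrightarrow> a \<in> gen_alg A Y"
| gen: "y \<in> Y \<Longrightarrow> y \<in> gen_alg A Y"
| add: "x \<in> gen_alg A Y \<Longrightarrow> y \<in> gen_alg A Y \<Longrightarrow> x + y \<in> gen_alg A Y"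
| mult: "x \<in> gen_alg A Y \<Longrightarrow> y \<in> gen_alg A Y \<Longrightarrow> x * y \<in> gen_alg A Y"

definition affine_over :: "('w::semiring_1 \<Rightarrow> 'w \<Rightarrow> bool) \<Rightarrow> 'w set \<Rightarrow> 'w set \<Rightarrow> bool" where
  "affine_over le A S \<longleftrightarrow>
     (\<exists>Y. finite Y \<and> Y \<subseteq> S \<and> (\<forall>w\<in>S. \<exists>w'\<in>gen_alg A Y. le w' w))"

definition central :: "'w::semiring_1 set \<Rightarrow> bool" where
  "central K \<longleftrightarrow> (\<forall>k\<in>K. \<forall>w. k * w = w * k)"

definition spans :: "('w::semiring_1 \<Rightarrow> 'w \<Rightarrow> bool) \<Rightarrow> 'w set \<Rightarrow> 'w set \<Rightarrow> bool" where
  "spans le K B \<longleftrightarrow>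
     (\<forall>v. \<exists>n::nat. \<exists>k b. (\<forall>i<n. k i \<in> K \<and> b i \<in> B) \<and> le (\<Sum>i<n. k i * b i) v)"

definition independent :: "('w::semiring_1 \<Rightarrow> 'w \<Rightarrow> bool) \<Rightarrow> 'w set \<Rightarrow> 'w set \<Rightarrow> bool" where
  "independent le K B \<longleftrightarrow>
     (\<forall>n::nat. \<forall>b k k'. inj_on b {..<n} \<and> (\<forall>i<n. b i \<in> B \<and> k i \<in> K \<and> k' i \<in> K) \<and>
        le (\<Sum>i<n. k i * b i) (\<Sum>i<n. k' i * b i) \<longrightarrow> (\<forall>i<n. le (k i) (k' i)))"

definition is_base :: "('w::semiring_1 \<Rightarrow> 'w \<Rightarrow> bool) \<Rightarrow> 'w set \<Rightarrow> 'w set \<Rightarrow> bool" where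
  "is_base le K B \<longleftrightarrow> independent le K B \<and> spans le K B"

end

theory Submission
  imports Defs
begin

text \<open>For each v among the generators Y of W over A, the element 1 and the products b b' of
base elements, pick K-coefficients of a combination of B surpassed by v; let G be the finite
set of all these coefficients. Centrality of K lets products of combinations be rewritten via
the structure constants of the b b', so by induction every element of A[Y], and hence every
element of W, surpasses a combination of B with coefficients in A[G]. Applied to k j for a
base element j, independence compares coefficients at j and yields an element of A[G] below k.\<close>

lemma surpassing_refl: "surpassing le \<Longrightarrow> le x x"
  unfolding surpassing_def by blast

lemma surpassing_trans: "surpassing le \<Longrightarrow> le x y \<Longrightarrow> le y z \<Longrightarrow> le x z"
  unfolding surpassing_def by blast

lemma surpassing_mult_left: "surpassing le \<Longrightarrow> le x y \<Longrightarrow> le (c * x) (c * y)"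
  unfolding surpassing_def by blast

lemma surpassing_add_mono:
  assumes "surpassing le" "le x' x" "le y' y"
  shows "le (x' + y') (x + y)"
proof -
  have "le (x' + y') (x + y')" using assms unfolding surpassing_def by blast
  moreover have "le (y' + x) (y + x)" using assms unfolding surpassing_def by blast
  ultimately show ?thesis using assms(1) unfolding surpassing_def by (metis add.commute)
qed

lemma surpassing_mult_mono:
  assumes "surpassing le" "le x' x" "le y' y"
  shows "le (x' * y') (x * y)"
proof -
  have "le (x' * y') (x * y')" using assms unfolding surpassing_def by blast
  moreover have "le (x * y') (x * y)" using assms unfolding surpassing_def by blast
  ultimately show ?thesis using surpassing_trans[OF assms(1)] by blast
qed

lemma surpassing_sum_mono:
  assumes "surpassing le" "\<And>i. i \<in> I \<Longrightarrow> le (f i) (g i)"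
  shows "le (sum f I) (sum g I)"
  using assms(2)
  by (induction I rule: infinite_finite_induct)
     (auto intro: surpassing_refl[OF assms(1)] surpassing_add_mono[OF assms(1)])

lemma sum_mem_closed:
  assumes "0 \<in> C" "\<forall>x\<in>C. \<forall>y\<in>C. x + y \<in> C" "\<And>i. i \<in> I \<Longrightarrow> f i \<in> C"
  shows "sum f I \<in> C"
  using assms(3) by (induction I rule: infinite_finite_induct) (auto simp: assms(1,2))

lemma gen_alg_subset:
  assumes "sub_semialgebra A K" "G \<subseteq> K"
  shows "gen_alg A G \<subseteq> K"
proof
  fix x assume "x \<in> gen_alg A G"
  then show "x \<in> K" using assms unfolding sub_semialgebra_def
    by (induction rule: gen_alg.induct) auto
qed

lemma sub_semialgebra_gen_alg: "sub_semialgebra A (gen_alg A G)"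
  unfolding sub_semialgebra_def by (auto intro: gen_alg.intros)

definition surpasses_combination ::
    "('w::semiring_1 \<Rightarrow> 'w \<Rightarrow> bool) \<Rightarrow> 'w set \<Rightarrow> 'w set \<Rightarrow> 'w \<Rightarrow> bool" where
  "surpasses_combination le C B x \<longleftrightarrow> (\<exists>c. (\<forall>b\<in>B. c b \<in> C) \<and> le (\<Sum>b\<in>B. c b * b) x)"

lemma surpasses_combination_trans:
  "surpassing le \<Longrightarrow> surpasses_combination le C B x \<Longrightarrow> le x y \<Longrightarrow> surpasses_combination le C B y"
  unfolding surpasses_combination_def by (meson surpassing_trans)

text \<open>Spanning sums may repeat base elements; grouping equal ones gives one coefficient each.\<close>
lemma spans_imp_surpasses_combination:
  assumes "spans le K B" "finite B" "0 \<in> K" "\<forall>x\<in>K. \<forall>y\<in>K. x + y \<in> K"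
  shows "surpasses_combination le K B v"
proof -
  obtain n :: nat and k b where kb: "\<forall>i<n. k i \<in> K \<and> b i \<in> B"
    and le: "le (\<Sum>i<n. k i * b i) v"
    using assms(1) unfolding spans_def by blast
  define c where "c x = (\<Sum>i\<in>{i\<in>{..<n}. b i = x}. k i)" for x
  have "(\<Sum>x\<in>B. c x * x) = (\<Sum>x\<in>B. \<Sum>i\<in>{i\<in>{..<n}. b i = x}. k i * b i)"
    unfolding c_def by (auto simp: sum_distrib_right intro!: sum.cong)
  also have "\<dots> = (\<Sum>i<n. k i * b i)"
    by (rule sum.group) (use kb assms(2) in auto)
  finally have "(\<Sum>x\<in>B. c x * x) = (\<Sum>i<n. k i * b i)" .
  moreover have "\<forall>x\<in>B. c x \<in> K"
    unfolding c_def by (auto intro!: sum_mem_closed assms(3,4) simp: kb)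
  ultimately show ?thesis
    using le unfolding surpasses_combination_def by (intro exI[of _ c]) simp
qed

lemma surpasses_combination_add:
  assumes "surpassing le" "\<forall>x\<in>C. \<forall>y\<in>C. x + y \<in> C"
    and "surpasses_combination le C B x" "surpasses_combination le C B y"
  shows "surpasses_combination le C B (x + y)"
proof -
  obtain c d where c: "\<forall>b\<in>B. c b \<in> C" "le (\<Sum>b\<in>B. c b * b) x"
    and d: "\<forall>b\<in>B. d b \<in> C" "le (\<Sum>b\<in>B. d b * b) y"
    using assms(3,4) unfolding surpasses_combination_def by blast
  have "le (\<Sum>b\<in>B. (c b + d b) * b) (x + y)"
    using surpassing_add_mono[OF assms(1) c(2) d(2)] by (simp add: sum.distrib distrib_right)
  then show ?thesis
    using c(1) d(1) assms(2) unfolding surpasses_combination_def by (intro exI[of _ "\<lambda>b. c b + d b"]) simp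
qed

lemma surpasses_combination_mult_left:
  assumes "surpassing le" "\<forall>x\<in>C. \<forall>y\<in>C. x * y \<in> C" "a \<in> C"
    and "surpasses_combination le C B x"
  shows "surpasses_combination le C B (a * x)"
proof -
  obtain c where c: "\<forall>b\<in>B. c b \<in> C" "le (\<Sum>b\<in>B. c b * b) x"
    using assms(4) unfolding surpasses_combination_def by blast
  have "le (\<Sum>b\<in>B. (a * c b) * b) (a * x)"
    using surpassing_mult_left[OF assms(1) c(2)] by (simp add: sum_distrib_left mult.assoc)
  then show ?thesis
    using c(1) assms(2,3) unfolding surpasses_combination_def by (intro exI[of _ "\<lambda>b. a * c b"]) simp
qed

lemma surpasses_combination_mult:
  assumes sp: "surpassing le" and "0 \<in> C"
    and closed: "\<forall>x\<in>C. \<forall>y\<in>C. x + y \<in> C \<and> x * y \<in> C"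
    and "central C"
    and structure_constants: "\<forall>b\<in>B. \<forall>b'\<in>B. surpasses_combination le C B (b * b')"
    and "surpasses_combination le C B x" "surpasses_combination le C B y"
  shows "surpasses_combination le C B (x * y)"
proof -
  obtain c d where c: "\<forall>b\<in>B. c b \<in> C" "le (\<Sum>b\<in>B. c b * b) x"
    and d: "\<forall>b\<in>B. d b \<in> C" "le (\<Sum>b\<in>B. d b * b) y"
    using assms(6,7) unfolding surpasses_combination_def by blast
  have "\<forall>p\<in>B \<times> B. \<exists>e. (\<forall>t\<in>B. e t \<in> C) \<and> le (\<Sum>t\<in>B. e t * t) (fst p * snd p)"
    using structure_constants unfolding surpasses_combination_def by auto
  then obtain s where s: "\<forall>p\<in>B \<times> B. (\<forall>t\<in>B. s p t \<in> C) \<and> le (\<Sum>t\<in>B. s p t * t) (fst p * snd p)"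
    by (rule bchoice[THEN exE])
  define e where "e t = (\<Sum>b\<in>B. \<Sum>b'\<in>B. c b * d b' * s (b, b') t)" for t
  note surpassing_trans[OF sp, trans]
  have "(\<Sum>t\<in>B. e t * t) = (\<Sum>t\<in>B. \<Sum>b\<in>B. \<Sum>b'\<in>B. c b * d b' * s (b, b') t * t)"
    unfolding e_def by (simp add: sum_distrib_right)
  also have "\<dots> = (\<Sum>b\<in>B. \<Sum>b'\<in>B. \<Sum>t\<in>B. c b * d b' * s (b, b') t * t)"
    by (rule trans[OF sum.swap sum.cong[OF refl sum.swap]])
  also have "\<dots> = (\<Sum>b\<in>B. \<Sum>b'\<in>B. (c b * d b') * (\<Sum>t\<in>B. s (b, b') t * t))"
    by (simp add: sum_distrib_left mult.assoc)
  also have "le \<dots> (\<Sum>b\<in>B. \<Sum>b'\<in>B. (c b * d b') * (b * b'))"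
    using s by (intro surpassing_sum_mono[OF sp] surpassing_mult_left[OF sp]) auto
  also have "\<dots> = (\<Sum>b\<in>B. c b * b) * (\<Sum>b\<in>B. d b * b)"
    unfolding sum_product
  proof (intro sum.cong refl)
    fix b b' assume "b \<in> B" "b' \<in> B"
    then have "b * d b' = d b' * b" using d(1) \<open>central C\<close> unfolding central_def by metis
    then show "(c b * d b') * (b * b') = (c b * b) * (d b' * b')" by (metis mult.assoc)
  qed
  also have "le \<dots> (x * y)"
    using surpassing_mult_mono[OF sp c(2) d(2)] .
  finally have "le (\<Sum>t\<in>B. e t * t) (x * y)" .
  moreover have "\<forall>t\<in>B. e t \<in> C"
    unfolding e_def using c(1) d(1) s closed \<open>0 \<in> C\<close> by (auto intro!: sum_mem_closed)
  ultimately show ?thesis unfolding surpasses_combination_def by blast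
qed

lemma gen_alg_surpasses_combination:
  assumes sp: "surpassing le" and "sub_semialgebra A C" "central C" "0 \<in> C"
    and gens: "\<forall>v \<in> Y \<union> {1} \<union> (\<lambda>(b, b'). b * b') ` (B \<times> B). surpasses_combination le C B v"
    and "x \<in> gen_alg A Y"
  shows "surpasses_combination le C B x"
proof -
  have "A \<subseteq> C" and closed: "\<forall>x\<in>C. \<forall>y\<in>C. x + y \<in> C \<and> x * y \<in> C"
    using \<open>sub_semialgebra A C\<close> unfolding sub_semialgebra_def by auto
  from \<open>x \<in> gen_alg A Y\<close> show ?thesis
  proof (induction rule: gen_alg.induct)
    case (base a)
    then have "surpasses_combination le C B (a * 1)"
      using gens \<open>A \<subseteq> C\<close> closed by (intro surpasses_combination_mult_left[OF sp]) auto
    then show ?case by simp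
  next
    case (add x y)
    then show ?case using surpasses_combination_add[OF sp] closed by blast
  next
    case (mult x y)
    then show ?case
      using surpasses_combination_mult[OF sp \<open>0 \<in> C\<close> closed \<open>central C\<close>] gens by blast
  qed (use gens in blast)
qed

lemma independent_coeffs_le:
  assumes "independent le K B" "finite B" "\<forall>b\<in>B. c b \<in> K" "\<forall>b\<in>B. d b \<in> K"
    and "le (\<Sum>b\<in>B. c b * b) (\<Sum>b\<in>B. d b * b)" "j \<in> B"
  shows "le (c j) (d j)"
proof -
  obtain f where f: "bij_betw f {..<card B} B"
    using ex_bij_betw_nat_finite[OF assms(2)] by (auto simp: atLeast0LessThan)
  have "(\<Sum>b\<in>B. c b * b) = (\<Sum>i<card B. c (f i) * f i)"
    using sum.reindex_bij_betw[OF f, of "\<lambda>b. c b * b"] by simp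
  moreover have "(\<Sum>b\<in>B. d b * b) = (\<Sum>i<card B. d (f i) * f i)"
    using sum.reindex_bij_betw[OF f, of "\<lambda>b. d b * b"] by simp
  ultimately have sum_le: "le (\<Sum>i<card B. c (f i) * f i) (\<Sum>i<card B. d (f i) * f i)"
    using assms(5) by simp
  have inj: "inj_on f {..<card B}" and mem: "\<forall>i<card B. f i \<in> B \<and> c (f i) \<in> K \<and> d (f i) \<in> K"
    using f assms(3,4) by (auto simp: bij_betw_def)
  have "\<forall>i<card B. le (c (f i)) (d (f i))"
    using assms(1)[unfolded independent_def, rule_format, OF conjI[OF inj conjI[OF mem sum_le]]] by blast
  moreover have "j \<in> f ` {..<card B}"
    using f assms(6) by (simp add: bij_betw_def)
  ultimately show ?thesis by blast
qed

text \<open>Here k is read off as the coefficient at j of k j, with all other coefficients 0.\<close>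
lemma independent_coeff_below:
  assumes "independent le K B" "finite B" "C \<subseteq> K" "0 \<in> C"
    and "\<forall>w. surpasses_combination le C B w" "k \<in> K"
  shows "\<exists>c\<in>C. le c k"
proof (cases "B = {}")
  case True
  then show ?thesis using assms(4,5) unfolding surpasses_combination_def by auto
next
  case False
  then obtain j where j: "j \<in> B" by blast
  obtain c where c: "\<forall>b\<in>B. c b \<in> C" "le (\<Sum>b\<in>B. c b * b) (k * j)"
    using assms(5) unfolding surpasses_combination_def by blast
  have "(\<Sum>b\<in>B. (if b = j then k else 0) * b) = (\<Sum>b\<in>B. if b = j then k * j else 0)"
    by (intro sum.cong) auto
  also have "\<dots> = k * j"
    using j assms(2) by simp
  finally have sums_le: "le (\<Sum>b\<in>B. c b * b) (\<Sum>b\<in>B. (if b = j then k else 0) * b)"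
    using c(2) by (simp only:)
  have "\<forall>b\<in>B. c b \<in> K" "\<forall>b\<in>B. (if b = j then k else 0) \<in> K"
    using c(1) assms(3,4,6) by auto
  from independent_coeffs_le[OF assms(1,2) this sums_le j]
  have "le (c j) (if j = j then k else 0)" .
  then show ?thesis using c(1) j by auto
qed

lemma affine_imp_finite_coefficient_set:
  assumes "surpassing le" "finite B" "affine_over le A UNIV" "sub_semialgebra A K" "central K"
    and "0 \<in> A" "\<forall>v. surpasses_combination le K B v"
  obtains G where "finite G" "G \<subseteq> K" "\<forall>w. surpasses_combination le (gen_alg A G) B w"
proof -
  obtain Y where "finite Y" and Y: "\<forall>w. \<exists>w'\<in>gen_alg A Y. le w' w"
    using assms(3) unfolding affine_over_def by blast
  from assms(7) have "\<forall>v. \<exists>c. (\<forall>b\<in>B. c b \<in> K) \<and> le (\<Sum>b\<in>B. c b * b) v"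
    unfolding surpasses_combination_def .
  from choice[OF this] obtain cv
    where cv: "\<forall>v. (\<forall>b\<in>B. cv v b \<in> K) \<and> le (\<Sum>b\<in>B. cv v b * b) v" ..
  define V where "V = Y \<union> {1} \<union> (\<lambda>(b, b'). b * b') ` (B \<times> B)"
  define G where "G = (\<lambda>(v, b). cv v b) ` (V \<times> B)"
  have "finite G" "G \<subseteq> K" unfolding G_def V_def using \<open>finite Y\<close> assms(2) cv by auto
  have "central (gen_alg A G)"
    using gen_alg_subset[OF assms(4) \<open>G \<subseteq> K\<close>] assms(5) unfolding central_def by blast
  have "cv v b \<in> gen_alg A G" if "v \<in> V" "b \<in> B" for v b
    using that unfolding G_def by (intro gen_alg.gen) (auto intro!: image_eqI[of _ _ "(v, b)"])
  then have "\<forall>v\<in>V. surpasses_combination le (gen_alg A G) B v"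
    unfolding surpasses_combination_def using cv by blast
  then have on_gen_alg: "surpasses_combination le (gen_alg A G) B x" if "x \<in> gen_alg A Y" for x
    by (intro gen_alg_surpasses_combination[OF assms(1) sub_semialgebra_gen_alg
        \<open>central (gen_alg A G)\<close> gen_alg.base[OF \<open>0 \<in> A\<close>] _ that]) (simp add: V_def)
  have "surpasses_combination le (gen_alg A G) B w" for w
  proof -
    obtain w' where "w' \<in> gen_alg A Y" "le w' w" using Y by blast
    then show ?thesis by (intro surpasses_combination_trans[OF assms(1) on_gen_alg])
  qed
  then show ?thesis using that \<open>finite G\<close> \<open>G \<subseteq> K\<close> by blast
qed

theorem mainTheorem10:
  fixes le :: "'w::semiring_1 \<Rightarrow> 'w \<Rightarrow> bool"
    and A K B :: "'w set"
  assumes "semialgebra_over A"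
    and "surpassing le"
    and "affine_over le A UNIV"
    and "sub_semialgebra A K"
    and "central K"
    and "finite B"
    and "is_base le K B"
  shows "affine_over le A K"
proof -
  have "0 \<in> A" using assms(1) unfolding semialgebra_over_def comm_subsemiring_def by blast
  then have "0 \<in> K" and K_add: "\<forall>x\<in>K. \<forall>y\<in>K. x + y \<in> K"
    using assms(4) unfolding sub_semialgebra_def by auto
  have spans: "spans le K B" and indep: "independent le K B"
    using assms(7) unfolding is_base_def by auto
  have "\<forall>v. surpasses_combination le K B v"
    using spans_imp_surpasses_combination[OF spans assms(6) \<open>0 \<in> K\<close> K_add] by blast
  then obtain G where "finite G" "G \<subseteq> K" and G: "\<forall>w. surpasses_combination le (gen_alg A G) B w"
    by (rule affine_imp_finite_coefficient_set[OF assms(2,6,3,4,5) \<open>0 \<in> A\<close>])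
  have "gen_alg A G \<subseteq> K" by (rule gen_alg_subset[OF assms(4) \<open>G \<subseteq> K\<close>])
  then have "\<exists>c\<in>gen_alg A G. le c k" if "k \<in> K" for k
    by (rule independent_coeff_below[OF indep assms(6) _ gen_alg.base[OF \<open>0 \<in> A\<close>] G that])
  then show ?thesis
    unfolding affine_over_def using \<open>finite G\<close> \<open>G \<subseteq> K\<close> by blast
qed

end
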